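(* Let $w$ be a word and $TG(w) = (V, E_1, \dots, E_T)$ the temporal graph it represents, and suppose $TG(w)$ is connected in every timestep. Then for every edge $(v_x, v_y)$ of $G(w)$ and every $t \in [1, T - \min(d(v_x), d(v_y))]$, we have $(v_x, v_y) \in E_t \cup E_{t+1} \cup \dots \cup E_{t + \min(d(v_x), d(v_y))}$.
   Context: Words are over $\Sigma=\{1,\dots,n\}$; $w[i]$ is the $i$-th letter, $w[i,j]$ the factor $w[i]\cdots w[j]$, $\mathrm{letters}(u)$ the set of symbols occurring in $u$, $\pi_{\mathcal S}(w)$ the subsequence of $w$ of all occurrences of symbols in $\mathcal S$. Symbols $x,y$ alternate in $w$ if $\pi_{\{x,y\}}(w) \in \{(xy)^k, (xy)^kx, (yx)^k, (yx)^ky : k \ge 0\}$. $G(w)$ has vertex set $V=\{v_1,\dots,v_n\}$ and undirected edge $(v_x,v_y)$ iff $x\neq y$ alternate in $w$; $d(v)$ is the degree of $v$ in $G(w)$. Start points: $S_1=1$, and $S_i$ is the least index $j>S_{i-1}$ with $w[j] \in \mathrm{letters}(w[S_{i-1},j-1])$; $S_1<\dots<S_T$ are all start points. The $t$-th timestep factor is $w[S_t,S_{t+1}-1]$ ($t<T$) or $w[S_T,|w|]$ ($t=T$). $TG(w)=(V,E_1,\dots,E_T)$ with $E_t$ the set of edges $(v_x,v_y)$ of $G(w)$ with $x$ or $y$ occurring in the $t$-th timestep factor. Connected in every timestep means $(V,E_t)$ is connected for all $t$. *)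

theory Defs
  imports Main
begin

(* Words are lists of nat; positions are 1-based as in the paper: w[i] = w ! (i - 1). *)

definition letter :: "nat list \<Rightarrow> nat \<Rightarrow> nat" where
  "letter w i = w ! (i - 1)"

definition letters_fac :: "nat list \<Rightarrow> nat \<Rightarrow> nat \<Rightarrow> nat set" where
  "letters_fac w i j = {letter w k | k. i \<le> k \<and> k \<le> j}"

definition alternate :: "nat list \<Rightarrow> nat \<Rightarrow> nat \<Rightarrow> bool" where
  "alternate w x y \<longleftrightarrow>
     (let p = filter (\<lambda>c. c = x \<or> c = y) w in
      \<exists>k. p = concat (replicate k [x, y]) \<or> p = concat (replicate k [x, y]) @ [x]
         \<or> p = concat (replicate k [y, x]) \<or> p = concat (replicate k [y, x]) @ [y])"

(* vertex v_x is identified with x; V = {1..n} *)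
definition Gedge :: "nat \<Rightarrow> nat list \<Rightarrow> nat \<Rightarrow> nat \<Rightarrow> bool" where
  "Gedge n w x y \<longleftrightarrow> x \<in> {1..n} \<and> y \<in> {1..n} \<and> x \<noteq> y \<and> alternate w x y"

definition deg :: "nat \<Rightarrow> nat list \<Rightarrow> nat \<Rightarrow> nat" where
  "deg n w x = card {y \<in> {1..n}. Gedge n w x y}"

inductive start_point :: "nat list \<Rightarrow> nat \<Rightarrow> bool" for w where
  first: "w \<noteq> [] \<Longrightarrow> start_point w 1"
| step: "start_point w s \<Longrightarrow> s < j \<Longrightarrow> j \<le> length w
         \<Longrightarrow> letter w j \<in> letters_fac w s (j - 1)
         \<Longrightarrow> (\<forall>j'. s < j' \<and> j' < j \<longrightarrow> letter w j' \<notin> letters_fac w s (j' - 1))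
         \<Longrightarrow> start_point w j"

definition num_steps :: "nat list \<Rightarrow> nat" where
  "num_steps w = card {s. start_point w s}"

definition S :: "nat list \<Rightarrow> nat \<Rightarrow> nat" where
  "S w t = sorted_list_of_set {s. start_point w s} ! (t - 1)"

definition step_letters :: "nat list \<Rightarrow> nat \<Rightarrow> nat set" where
  "step_letters w t =
     (if t < num_steps w then letters_fac w (S w t) (S w (Suc t) - 1)
      else letters_fac w (S w (num_steps w)) (length w))"

definition Eedge :: "nat \<Rightarrow> nat list \<Rightarrow> nat \<Rightarrow> nat \<Rightarrow> nat \<Rightarrow> bool" where
  "Eedge n w t x y \<longleftrightarrow> Gedge n w x y \<and> (x \<in> step_letters w t \<or> y \<in> step_letters w t)"

definition connected_every_step :: "nat \<Rightarrow> nat list \<Rightarrow> bool" where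
  "connected_every_step n w \<longleftrightarrow>
     (\<forall>t \<in> {1..num_steps w}. \<forall>a \<in> {1..n}. \<forall>b \<in> {1..n}. (Eedge n w t)\<^sup>*\<^sup>* a b)"

end

theory Submission
  imports Defs
begin

(* If the vertex x were absent from the d + 1 timesteps t, ..., t + d, where d is its degree,
   then connectivity of each (V, E_k) would force some neighbour of x to occur in every one of
   these timesteps.  By pigeonhole one neighbour z occurs in two of them, k < k'; but x and z
   alternate, so x occurs between these two occurrences of z, i.e. in some timestep of
   [k, k'], a contradiction. *)

lemma successively_neq_concat_replicate:
  assumes "a \<noteq> b"
  shows "successively (\<noteq>) (concat (replicate k [a, b]) @ [a])"
proof (induction k)
  case 0
  show ?case by simp
next
  case (Suc k)
  have "hd (concat (replicate k [a, b]) @ [a]) = a"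
    by (cases k) simp_all
  with Suc assms show ?case
    by (simp add: successively_Cons)
qed

lemma alternate_successively_neq:
  assumes "alternate w x y" and "x \<noteq> y"
  shows "successively (\<noteq>) (filter (\<lambda>c. c = x \<or> c = y) w)"
proof -
  have alt: "successively (\<noteq>) (concat (replicate k [a, b]))"
    "successively (\<noteq>) (concat (replicate k [a, b]) @ [a])"
    if "a \<noteq> b" for a b k
    using successively_neq_concat_replicate[OF that, of k] by (simp_all add: successively_append_iff)
  from assms obtain k where
    "let p = filter (\<lambda>c. c = x \<or> c = y) w in
       p = concat (replicate k [x, y]) \<or> p = concat (replicate k [x, y]) @ [x]
       \<or> p = concat (replicate k [y, x]) \<or> p = concat (replicate k [y, x]) @ [y]"
    unfolding alternate_def Let_def by blast
  with alt[of x y] alt[of y x] assms(2) show ?thesis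
    unfolding Let_def by auto
qed

lemma alternate_partner_between:
  assumes "alternate w x z" and "x \<noteq> z" and "w = u @ z # v @ z # u'"
  shows "x \<in> set v"
proof (rule ccontr)
  define P where "P = (\<lambda>c. c = x \<or> c = z)"
  assume "x \<notin> set v"
  then have "set (filter P v) \<subseteq> {z}"
    by (auto simp: P_def)
  then have "\<not> successively (\<noteq>) (z # filter P v @ [z])"
    by (cases "filter P v") auto
  moreover have "successively (\<noteq>) (filter P u @ (z # filter P v @ [z]) @ filter P u')"
    using alternate_successively_neq[OF assms(1,2)] assms(3) by (simp add: P_def)
  ultimately show False
    unfolding successively_append_iff by blast
qed

lemma alternate_partner_between_positions:
  assumes "alternate w x z" and "x \<noteq> z"
    and "1 \<le> i" and "i < j" and "j \<le> length w"
    and "letter w i = z" and "letter w j = z"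
  shows "x \<in> letters_fac w i j"
proof -
  define v where "v = take (j - 1 - i) (drop i w)"
  have "drop i w = v @ z # drop j w"
    using assms(4-7) id_take_nth_drop[of "j - 1 - i" "drop i w"]
    by (simp add: v_def letter_def)
  moreover have "w = take (i - 1) w @ z # drop i w"
    using assms(3-6) id_take_nth_drop[of "i - 1" w] by (simp add: letter_def)
  ultimately have "x \<in> set v"
    using alternate_partner_between[OF assms(1,2)] by metis
  then obtain q where "q < length v" "v ! q = x"
    by (auto simp: in_set_conv_nth)
  then have "letter w (i + q + 1) = x" "i + q + 1 < j"
    using assms(4,5) by (auto simp: v_def letter_def)
  then show ?thesis
    unfolding letters_fac_def by (intro CollectI exI[of _ "i + q + 1"]) auto
qed

lemma start_point_bounds: "start_point w s \<Longrightarrow> 1 \<le> s \<and> s \<le> length w"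
  by (induction rule: start_point.induct) (auto simp: Suc_le_eq)

lemma finite_start_points: "finite {s. start_point w s}"
  by (rule finite_subset[of _ "{1..length w}"]) (auto dest: start_point_bounds)

lemma length_sorted_start_points:
  "length (sorted_list_of_set {s. start_point w s}) = num_steps w"
  unfolding num_steps_def using finite_start_points by simp

lemma start_point_S:
  assumes "1 \<le> k" and "k \<le> num_steps w"
  shows "start_point w (S w k)"
proof -
  have "S w k \<in> set (sorted_list_of_set {s. start_point w s})"
    unfolding S_def using assms length_sorted_start_points[of w] by (intro nth_mem) simp
  then show ?thesis
    using finite_start_points by simp
qed

lemma S_less_S:
  assumes "1 \<le> k" and "k < k'" and "k' \<le> num_steps w"
  shows "S w k < S w k'"
  using sorted_wrt_nth_less[OF strict_sorted_list_of_set, of "k - 1" "k' - 1" "{s. start_point w s}"]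
    assms length_sorted_start_points[of w]
  unfolding S_def by simp

definition step_end :: "nat list \<Rightarrow> nat \<Rightarrow> nat" where
  "step_end w k = (if k < num_steps w then S w (Suc k) - 1 else length w)"

lemma step_letters_eq:
  "k \<le> num_steps w \<Longrightarrow> step_letters w k = letters_fac w (S w k) (step_end w k)"
  unfolding step_letters_def step_end_def by auto

lemma step_end_le_length:
  "1 \<le> k \<Longrightarrow> k \<le> num_steps w \<Longrightarrow> step_end w k \<le> length w"
  unfolding step_end_def using start_point_bounds[OF start_point_S, of "Suc k" w] by auto

lemma step_end_less_S:
  assumes "1 \<le> k" and "k < k'" and "k' \<le> num_steps w"
  shows "step_end w k < S w k'"
proof -
  have "S w (Suc k) \<le> S w k'"
    using S_less_S[of "Suc k" k' w] assms by (cases "Suc k = k'") auto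
  moreover have "1 \<le> S w (Suc k)"
    using start_point_bounds[OF start_point_S, of "Suc k" w] assms by auto
  ultimately show ?thesis
    unfolding step_end_def using assms by auto
qed

lemma step_containing_position:
  assumes "1 \<le> k" and "k \<le> k'" and "k' \<le> num_steps w"
    and "S w k \<le> r" and "r \<le> step_end w k'"
  shows "\<exists>m. k \<le> m \<and> m \<le> k' \<and> S w m \<le> r \<and> r \<le> step_end w m"
  using assms
proof (induction k')
  case 0
  then show ?case by simp
next
  case (Suc k')
  show ?case
  proof (cases "k = Suc k' \<or> S w (Suc k') \<le> r")
    case True
    then show ?thesis
      using Suc.prems by auto
  next
    case False
    then have "r \<le> step_end w k'"
      using Suc.prems unfolding step_end_def by auto
    then show ?thesis
      using Suc.IH False Suc.prems by fastforce
  qed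
qed

lemma letters_fac_steps:
  assumes "1 \<le> k" and "k \<le> k'" and "k' \<le> num_steps w"
    and "c \<in> letters_fac w (S w k) (step_end w k')"
  shows "\<exists>m. k \<le> m \<and> m \<le> k' \<and> c \<in> step_letters w m"
proof -
  obtain r where r: "c = letter w r" "S w k \<le> r" "r \<le> step_end w k'"
    using assms(4) unfolding letters_fac_def by blast
  then obtain m where m: "k \<le> m" "m \<le> k'" "S w m \<le> r" "r \<le> step_end w m"
    using step_containing_position assms(1-3) by blast
  then have "c \<in> letters_fac w (S w m) (step_end w m)"
    using r(1) unfolding letters_fac_def by blast
  with m(1,2) assms(3) show ?thesis
    by (auto simp: step_letters_eq)
qed

lemma alternate_partner_between_steps:
  assumes "alternate w x z" and "x \<noteq> z"
    and "1 \<le> k" and "k < k'" and "k' \<le> num_steps w"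
    and "z \<in> step_letters w k" and "z \<in> step_letters w k'"
  shows "\<exists>m. k \<le> m \<and> m \<le> k' \<and> x \<in> step_letters w m"
proof -
  obtain i where i: "z = letter w i" "S w k \<le> i" "i \<le> step_end w k"
    using assms(4,5,6) by (auto simp: step_letters_eq letters_fac_def)
  obtain j where j: "z = letter w j" "S w k' \<le> j" "j \<le> step_end w k'"
    using assms(5,7) by (auto simp: step_letters_eq letters_fac_def)
  have "1 \<le> i"
    using i(2) start_point_bounds[OF start_point_S, of k w] assms(3-5) by auto
  moreover have "i < j"
    using i(3) j(2) step_end_less_S[OF assms(3-5)] by auto
  moreover have "j \<le> length w"
    using j(3) step_end_le_length[of k' w] assms(3-5) by auto
  ultimately have "x \<in> letters_fac w i j"
    using alternate_partner_between_positions[OF assms(1,2)] i(1) j(1) by metis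
  then have "x \<in> letters_fac w (S w k) (step_end w k')"
    using i(2) j(3) unfolding letters_fac_def by auto
  then show ?thesis
    using letters_fac_steps assms(3-5) by simp
qed

lemma neighbour_in_step:
  assumes "(Eedge n w k)\<^sup>*\<^sup>* x y" and "x \<noteq> y" and "x \<notin> step_letters w k"
  shows "\<exists>z. Gedge n w x z \<and> z \<in> step_letters w k"
proof -
  obtain z where "Eedge n w k x z"
    using assms(1,2) by (cases rule: converse_rtranclpE) auto
  with assms(3) show ?thesis
    unfolding Eedge_def by blast
qed

lemma occurs_in_every_window:
  assumes conn: "connected_every_step n w"
    and vertices: "x \<in> {1..n}" "y \<in> {1..n}" "x \<noteq> y"
    and window: "1 \<le> t" "t + deg n w x \<le> num_steps w"
  shows "\<exists>s. t \<le> s \<and> s \<le> t + deg n w x \<and> x \<in> step_letters w s"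
proof (rule ccontr)
  assume absent: "\<not> ?thesis"
  define K where "K = {t..t + deg n w x}"
  define N where "N = {z \<in> {1..n}. Gedge n w x z}"
  have absent_K: "x \<notin> step_letters w k" if "k \<in> K" for k
    using that absent unfolding K_def by auto
  have "\<exists>z. Gedge n w x z \<and> z \<in> step_letters w k" if "k \<in> K" for k
  proof (rule neighbour_in_step)
    show "(Eedge n w k)\<^sup>*\<^sup>* x y"
      using conn vertices(1,2) that window unfolding connected_every_step_def K_def by auto
  qed (use vertices(3) absent_K that in auto)
  then obtain f where f: "\<And>k. k \<in> K \<Longrightarrow> Gedge n w x (f k) \<and> f k \<in> step_letters w k"
    by metis
  have "inj_on f K"
  proof (rule linorder_inj_onI')
    fix k k' assume k: "k \<in> K" "k' \<in> K" "k < k'"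
    show "f k \<noteq> f k'"
    proof
      assume "f k = f k'"
      then have "\<exists>m. k \<le> m \<and> m \<le> k' \<and> x \<in> step_letters w m"
        using alternate_partner_between_steps[of w x "f k" k k'] f[OF k(1)] f[OF k(2)] k window
        unfolding K_def Gedge_def by auto
      then show False
        using absent_K k(1,2) unfolding K_def by auto
    qed
  qed
  moreover have "f ` K \<subseteq> N"
    using f unfolding N_def Gedge_def by auto
  ultimately have "card K \<le> card N"
    by (intro card_inj_on_le) (auto simp: N_def)
  then show False
    unfolding K_def N_def deg_def by simp
qed

theorem corollary2:
  fixes n :: nat and w :: "nat list"
  assumes "set w \<subseteq> {1..n}"
    and "connected_every_step n w"
    and "Gedge n w x y"
    and "1 \<le> t" and "t \<le> num_steps w - min (deg n w x) (deg n w y)"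
  shows "\<exists>s. t \<le> s \<and> s \<le> t + min (deg n w x) (deg n w y) \<and> Eedge n w s x y"
proof -
  have window: "t + min (deg n w x) (deg n w y) \<le> num_steps w"
    using assms(4,5) by linarith
  obtain u v where uv: "{u, v} = {x, y}" "deg n w u = min (deg n w x) (deg n w y)"
    by (cases "deg n w x \<le> deg n w y") (auto simp: min_def)
  have "u \<in> {1..n}" "v \<in> {1..n}" "u \<noteq> v"
    using assms(3) uv(1) unfolding Gedge_def by (auto simp: doubleton_eq_iff)
  then obtain s where "t \<le> s" "s \<le> t + deg n w u" "u \<in> step_letters w s"
    using occurs_in_every_window[OF assms(2)] assms(4) window uv(2) by metis
  then show ?thesis
    using assms(3) uv unfolding Eedge_def by (auto simp: doubleton_eq_iff)
qed

end
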